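(* For every $n\ge 1$, every $\kappa\le\frac{n}{2n-1}$ and every doubly stochastic $n\times n$ matrix $\mathcal M$, there exists a directed $(2n-1)$-regular multigraph $G$ on $[n]$ whose direct throughput with respect to $\mathcal M$ is at least $\kappa$ (i.e., $G$ directly hosts $\kappa\mathcal M$).
   Context: Let $n\ge 1$ and $[n]=\{1,\dots,n\}$. Networks are finite directed multigraphs on vertex set $[n]$; self-loops and parallel arcs are allowed. A directed multigraph is directed $r$-regular if every vertex has exactly $r$ outgoing and exactly $r$ incoming arcs (a self-loop at $v$ counts as one outgoing and one incoming arc of $v$). An $n\times n$ matrix is doubly stochastic if all entries are nonnegative and every row and every column sums to $1$. In a directed $(2n-1)$-regular multigraph $G$ on $[n]$ every arc has capacity $\frac{1}{2n-1}$. $G$ directly hosts a nonnegative $n\times n$ matrix $\mathcal M=(a_{i,j})$ if the demand $a_{u,v}$ from $u$ to $v$ can be routed entirely on arcs from $u$ to $v$ without exceeding capacities, i.e., equivalently, if $a_{u,v}\le \frac{m_{u,v}}{2n-1}$ for all $u,v\in[n]$, where $m_{u,v}$ is the number of arcs from $u$ to $v$ in $G$. The direct throughput of $G$ with respect to a doubly stochastic $\mathcal M$ is the largest $\theta$ such that $G$ directly hosts $\theta\mathcal M$. *)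

theory Defs
  imports Complex_Main
begin

text \<open>A directed multigraph on vertex set {1..n} is represented by its arc
multiplicity function: m u v is the number of arcs from u to v
(self-loops are m v v).\<close>

definition multigraph_on :: "nat \<Rightarrow> (nat \<Rightarrow> nat \<Rightarrow> nat) \<Rightarrow> bool" where
  "multigraph_on n m \<longleftrightarrow>
     (\<forall>u v. (u \<notin> {1..n} \<or> v \<notin> {1..n}) \<longrightarrow> m u v = 0)"

definition directed_regular :: "nat \<Rightarrow> nat \<Rightarrow> (nat \<Rightarrow> nat \<Rightarrow> nat) \<Rightarrow> bool" where
  "directed_regular n r m \<longleftrightarrow> multigraph_on n m \<and>
     (\<forall>u\<in>{1..n}. (\<Sum>v\<in>{1..n}. m u v) = r) \<and>
     (\<forall>v\<in>{1..n}. (\<Sum>u\<in>{1..n}. m u v) = r)"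

text \<open>n x n real matrices are functions nat => nat => real, indexed by {1..n}.\<close>

definition doubly_stochastic :: "nat \<Rightarrow> (nat \<Rightarrow> nat \<Rightarrow> real) \<Rightarrow> bool" where
  "doubly_stochastic n A \<longleftrightarrow>
     (\<forall>i\<in>{1..n}. \<forall>j\<in>{1..n}. 0 \<le> A i j) \<and>
     (\<forall>i\<in>{1..n}. (\<Sum>j\<in>{1..n}. A i j) = 1) \<and>
     (\<forall>j\<in>{1..n}. (\<Sum>i\<in>{1..n}. A i j) = 1)"

text \<open>G (with arcs of capacity 1/(2n-1)) directly hosts the matrix A.\<close>

definition directly_hosts :: "nat \<Rightarrow> (nat \<Rightarrow> nat \<Rightarrow> nat) \<Rightarrow> (nat \<Rightarrow> nat \<Rightarrow> real) \<Rightarrow> bool" where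
  "directly_hosts n m A \<longleftrightarrow>
     (\<forall>u\<in>{1..n}. \<forall>v\<in>{1..n}. A u v \<le> real (m u v) / (2 * real n - 1))"

end

(* Round n * M entrywise up to integers. Every row and column of M sums to 1 and
   rounding adds less than 1 per entry, so every line of the rounded matrix sums to
   less than 2n, i.e. to at most 2n - 1; with arc capacity 1/(2n - 1) it hosts
   (n/(2n - 1)) M directly. The row deficits and the column deficits up to 2n - 1 have
   the same total, so they are the margins of some nonnegative integer matrix, and
   adding it yields a (2n - 1)-regular multigraph. *)
theory Submission
  imports Defs
begin

lemma nat_matrix_with_margins_exists:
  fixes r s :: "'a \<Rightarrow> nat"
  assumes "finite A" and "sum r A = sum s A"
  shows "\<exists>d. (\<forall>u\<in>A. (\<Sum>v\<in>A. d u v) = r u) \<and> (\<forall>v\<in>A. (\<Sum>u\<in>A. d u v) = s v)"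
  using assms(2)
proof (induction "sum r A" arbitrary: r s)
  case 0
  then show ?case
    using assms(1) by (intro exI[of _ "\<lambda>_ _. 0"]) simp
next
  case (Suc k)
  \<comment> \<open>take one unit from a positive row u and a positive column v; the smaller margins have a solution, to which entry (u, v) gets the unit back\<close>
  obtain u where u: "u \<in> A" "r u \<noteq> 0"
    using Suc.hyps(2) by (metis sum.not_neutral_contains_not_neutral nat.distinct(1))
  obtain v where v: "v \<in> A" "s v \<noteq> 0"
    using Suc.hyps(2) Suc.prems by (metis sum.not_neutral_contains_not_neutral nat.distinct(1))
  define r' where "r' x = r x - of_bool (x = u)" for x
  define s' where "s' y = s y - of_bool (y = v)" for y
  have r_split: "r x = r' x + of_bool (x = u)" for x
    using u(2) by (simp add: r'_def)
  have s_split: "s y = s' y + of_bool (y = v)" for y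
    using v(2) by (simp add: s'_def)
  have "sum r A = sum r' A + 1" and "sum s A = sum s' A + 1"
    using u v assms(1) by (simp_all add: r_split s_split sum.distrib of_bool_def)
  then have "k = sum r' A" and "sum r' A = sum s' A"
    using Suc.hyps(2) Suc.prems by simp_all
  then obtain d where
    d: "\<forall>x\<in>A. (\<Sum>y\<in>A. d x y) = r' x" "\<forall>y\<in>A. (\<Sum>x\<in>A. d x y) = s' y"
    using Suc.hyps(1) by blast
  define e where "e x y = d x y + of_bool (x = u \<and> y = v)" for x y
  have "\<forall>x\<in>A. (\<Sum>y\<in>A. e x y) = r x" and "\<forall>y\<in>A. (\<Sum>x\<in>A. e x y) = s y"
    using d u v assms(1) by (simp_all add: e_def r_split s_split sum.distrib of_bool_def)
  then show ?case by blast
qed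

lemma nat_matrix_dominated_by_line_sums_exists:
  fixes c :: "'a \<Rightarrow> 'a \<Rightarrow> nat"
  assumes fin: "finite A"
    and rows: "\<forall>u\<in>A. (\<Sum>v\<in>A. c u v) \<le> r"
    and cols: "\<forall>v\<in>A. (\<Sum>u\<in>A. c u v) \<le> r"
  shows "\<exists>m. (\<forall>u\<in>A. \<forall>v\<in>A. c u v \<le> m u v) \<and>
             (\<forall>u\<in>A. (\<Sum>v\<in>A. m u v) = r) \<and> (\<forall>v\<in>A. (\<Sum>u\<in>A. m u v) = r)"
proof -
  define row_deficit where "row_deficit u = r - (\<Sum>v\<in>A. c u v)" for u
  define col_deficit where "col_deficit v = r - (\<Sum>u\<in>A. c u v)" for v
  have "sum row_deficit A + (\<Sum>u\<in>A. \<Sum>v\<in>A. c u v) = card A * r"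
    using rows by (simp add: row_deficit_def flip: sum.distrib)
  moreover have "sum col_deficit A + (\<Sum>v\<in>A. \<Sum>u\<in>A. c u v) = card A * r"
    using cols by (simp add: col_deficit_def flip: sum.distrib)
  ultimately have "sum row_deficit A = sum col_deficit A"
    by (metis sum.swap add_right_cancel)
  then obtain d where
    d: "\<forall>u\<in>A. (\<Sum>v\<in>A. d u v) = row_deficit u" "\<forall>v\<in>A. (\<Sum>u\<in>A. d u v) = col_deficit v"
    using nat_matrix_with_margins_exists[OF fin] by blast
  have "\<forall>u\<in>A. (\<Sum>v\<in>A. c u v + d u v) = r" and "\<forall>v\<in>A. (\<Sum>u\<in>A. c u v + d u v) = r"
    using d rows cols by (simp_all add: sum.distrib row_deficit_def col_deficit_def)
  then show ?thesis
    by (intro exI[of _ "\<lambda>u v. c u v + d u v"]) simp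
qed

lemma directed_regular_dominating_exists:
  assumes "\<forall>u\<in>{1..n}. (\<Sum>v\<in>{1..n}. c u v) \<le> r"
    and "\<forall>v\<in>{1..n}. (\<Sum>u\<in>{1..n}. c u v) \<le> r"
  shows "\<exists>m. directed_regular n r m \<and> (\<forall>u\<in>{1..n}. \<forall>v\<in>{1..n}. c u v \<le> m u v)"
proof -
  obtain m where m: "\<forall>u\<in>{1..n}. \<forall>v\<in>{1..n}. c u v \<le> m u v"
    "\<forall>u\<in>{1..n}. (\<Sum>v\<in>{1..n}. m u v) = r" "\<forall>v\<in>{1..n}. (\<Sum>u\<in>{1..n}. m u v) = r"
    using nat_matrix_dominated_by_line_sums_exists[OF finite_atLeastAtMost assms] by blast
  define m' where "m' u v = (if u \<in> {1..n} \<and> v \<in> {1..n} then m u v else 0)" for u v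
  have "directed_regular n r m'"
    using m(2,3) by (simp add: directed_regular_def multigraph_on_def m'_def)
  moreover have "\<forall>u\<in>{1..n}. \<forall>v\<in>{1..n}. c u v \<le> m' u v"
    using m(1) by (simp add: m'_def)
  ultimately show ?thesis by blast
qed

lemma sum_nat_ceiling_less:
  fixes f :: "'a \<Rightarrow> real"
  assumes "finite A" and "A \<noteq> {}" and "\<forall>x\<in>A. 0 \<le> f x"
  shows "real (\<Sum>x\<in>A. nat \<lceil>f x\<rceil>) < sum f A + card A"
proof -
  have "real (\<Sum>x\<in>A. nat \<lceil>f x\<rceil>) = (\<Sum>x\<in>A. real_of_int \<lceil>f x\<rceil>)"
    using assms(3) by simp
  also have "\<dots> < (\<Sum>x\<in>A. f x + 1)"
    using assms(1,2) by (intro sum_strict_mono) linarith+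
  also have "\<dots> = sum f A + card A"
    by (simp add: sum.distrib)
  finally show ?thesis .
qed

lemma doubly_stochastic_rounded_line_sums:
  assumes "doubly_stochastic n M" and "u \<in> {1..n}"
  shows "(\<Sum>v\<in>{1..n}. nat \<lceil>real n * M u v\<rceil>) \<le> 2 * n - 1"
    and "(\<Sum>v\<in>{1..n}. nat \<lceil>real n * M v u\<rceil>) \<le> 2 * n - 1"
proof -
  have rounded_sum_bound: "(\<Sum>v\<in>{1..n}. nat \<lceil>real n * f v\<rceil>) \<le> 2 * n - 1"
    if "\<forall>v\<in>{1..n}. 0 \<le> f v" and "(\<Sum>v\<in>{1..n}. f v) = 1" for f
  proof -
    have "real (\<Sum>v\<in>{1..n}. nat \<lceil>real n * f v\<rceil>) < real n * (\<Sum>v\<in>{1..n}. f v) + n"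
      using sum_nat_ceiling_less[of "{1..n}" "\<lambda>v. real n * f v"] assms(2) that(1)
      by (auto simp: sum_distrib_left)
    with that(2) have "real (\<Sum>v\<in>{1..n}. nat \<lceil>real n * f v\<rceil>) < real (2 * n)"
      by (simp del: of_nat_sum)
    then show ?thesis
      by linarith
  qed
  show "(\<Sum>v\<in>{1..n}. nat \<lceil>real n * M u v\<rceil>) \<le> 2 * n - 1"
    using assms by (intro rounded_sum_bound) (auto simp: doubly_stochastic_def)
  show "(\<Sum>v\<in>{1..n}. nat \<lceil>real n * M v u\<rceil>) \<le> 2 * n - 1"
    using assms by (intro rounded_sum_bound) (auto simp: doubly_stochastic_def)
qed

theorem proposition3p5:
  fixes n :: nat and \<kappa> :: real and M :: "nat \<Rightarrow> nat \<Rightarrow> real"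
  assumes "n \<ge> 1"
    and "\<kappa> \<le> real n / (2 * real n - 1)"
    and "doubly_stochastic n M"
  shows "\<exists>m. directed_regular n (2 * n - 1) m \<and>
                directly_hosts n m (\<lambda>i j. \<kappa> * M i j)"
proof -
  obtain m where regular: "directed_regular n (2 * n - 1) m"
    and above: "\<forall>u\<in>{1..n}. \<forall>v\<in>{1..n}. nat \<lceil>real n * M u v\<rceil> \<le> m u v"
    using directed_regular_dominating_exists[of n "\<lambda>u v. nat \<lceil>real n * M u v\<rceil>"]
      doubly_stochastic_rounded_line_sums[OF assms(3)] by blast
  have "directly_hosts n m (\<lambda>i j. \<kappa> * M i j)"
    unfolding directly_hosts_def
  proof (intro ballI)
    fix u v assume uv: "u \<in> {1..n}" "v \<in> {1..n}"
    have M_nonneg: "0 \<le> M u v"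
      using assms(3) uv by (simp add: doubly_stochastic_def)
    have "\<kappa> * M u v \<le> real n / (2 * real n - 1) * M u v"
      using assms(2) M_nonneg by (rule mult_right_mono)
    also have "\<dots> = real n * M u v / (2 * real n - 1)"
      by simp
    also have "\<dots> \<le> real (m u v) / (2 * real n - 1)"
    proof (rule divide_right_mono)
      have "real n * M u v \<le> real (nat \<lceil>real n * M u v\<rceil>)"
        by linarith
      also have "\<dots> \<le> real (m u v)"
        using above uv by simp
      finally show "real n * M u v \<le> real (m u v)" .
    qed (use assms(1) in simp)
    finally show "\<kappa> * M u v \<le> real (m u v) / (2 * real n - 1)" .
  qed
  with regular show ?thesis by blast
qed

end
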